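(* Let $Z=Z_\Sigma$ be a toric variety with a non-degenerate simplicial fan $\Sigma$ in $N=\mathbb{Z}^r$, with notation as in the context. Then \[ [\operatorname{Cl}(Z):\operatorname{Pic}(Z)] \;=\; \frac{1}{|\hat K|}\prod_{\sigma\in\Sigma_{\max}}|K_\sigma|. \]
   Context: Non-degenerate means the primitive ray generators $v_1,\dots,v_n$ of $\Sigma$ generate $\mathbb{Q}^r$ as a convex cone (completeness is not required). Let $F=\mathbb{Z}^n$, $P\colon F\to N$, $e_i\mapsto v_i$, $M=N^*$, $E=F^*$, $K=E/P^*(M)\cong\operatorname{Cl}(Z)$. For $\sigma=\operatorname{cone}(v_{i_1},\dots,v_{i_{n_\sigma}})\in\Sigma_{\max}$ let $N_\sigma=\operatorname{lin}_{\mathbb{Q}}(\sigma)\cap N$, $F_\sigma=\mathbb{Z}^{n_\sigma}$, $P_\sigma\colon F_\sigma\to N_\sigma$, $e_j\mapsto v_{i_j}$, $\beta_\sigma\colon F_\sigma\to F$, $e_j\mapsto e_{i_j}$, $K_\sigma=F_\sigma^*/P_\sigma^*(N_\sigma^* )\cong\operatorname{Cl}(U_\sigma)$ (class group of the affine chart), and $\pi_\sigma\colon K\to K_\sigma$ the map induced by $\beta_\sigma^*$ (restriction of classes). Let $\pi\colon K\to\bigoplus_{\sigma\in\Sigma_{\max}}K_\sigma$, $w\mapsto(\pi_\sigma(w))_\sigma$, and $\hat K=\big(\bigoplus_\sigma K_\sigma\big)/\pi(K)$. *)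

theory Defs
  imports Complex_Main "HOL-Library.Set_Algebras" "HOL-Library.Function_Algebras"
begin

text \<open>N = Z^r is modelled by integer vectors nat \<Rightarrow> int (coordinates k < r,
  zero beyond r); the ray generators are v 0, ..., v (n-1).  A simplicial fan is given by the
  set of index sets S \<subseteq> {..<n} such that cone(v_i : i \<in> S) is a cone of the fan.
  Quotients A/B of additive groups are modelled literally as sets of cosets {a} + B,
  with the pointwise (Minkowski) sum of sets as group operation.\<close>

type_synonym vec = "nat \<Rightarrow> int"

definition cosets :: "'a::plus set \<Rightarrow> 'a set \<Rightarrow> 'a set set" where
  "cosets G H = (\<lambda>g. {g} + H) ` G"

definition dotp :: "nat \<Rightarrow> vec \<Rightarrow> vec \<Rightarrow> int" where
  "dotp r m x = (\<Sum>k<r. m k * x k)"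

definition rcone :: "nat \<Rightarrow> (nat \<Rightarrow> vec) \<Rightarrow> nat set \<Rightarrow> (nat \<Rightarrow> rat) set" where
  "rcone r v S = {x. (\<forall>k\<ge>r. x k = 0) \<and>
     (\<exists>c::nat \<Rightarrow> rat. (\<forall>i\<in>S. 0 \<le> c i) \<and> (\<forall>k<r. x k = (\<Sum>i\<in>S. c i * of_int (v i k))))}"

definition lin_indep_Q :: "nat \<Rightarrow> (nat \<Rightarrow> vec) \<Rightarrow> nat set \<Rightarrow> bool" where
  "lin_indep_Q r v S \<longleftrightarrow> (\<forall>c::nat \<Rightarrow> rat.
     (\<forall>k<r. (\<Sum>i\<in>S. c i * of_int (v i k)) = 0) \<longrightarrow> (\<forall>i\<in>S. c i = 0))"

definition primitive_vec :: "nat \<Rightarrow> vec \<Rightarrow> bool" where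
  "primitive_vec r w \<longleftrightarrow> (\<exists>k<r. w k \<noteq> 0) \<and> (\<forall>d::int. (\<forall>k<r. d dvd w k) \<longrightarrow> d dvd 1)"

definition simplicial_fan :: "nat \<Rightarrow> nat \<Rightarrow> (nat \<Rightarrow> vec) \<Rightarrow> nat set set \<Rightarrow> bool" where
  "simplicial_fan n r v Sig \<longleftrightarrow>
     (\<forall>i<n. \<forall>k\<ge>r. v i k = 0) \<and>
     (\<forall>i<n. primitive_vec r (v i)) \<and>
     Sig \<subseteq> Pow {..<n} \<and>
     (\<forall>i<n. {i} \<in> Sig) \<and>
     (\<forall>S\<in>Sig. \<forall>T. T \<subseteq> S \<longrightarrow> T \<in> Sig) \<and>
     (\<forall>S\<in>Sig. lin_indep_Q r v S) \<and>
     (\<forall>S\<in>Sig. \<forall>T\<in>Sig. rcone r v S \<inter> rcone r v T = rcone r v (S \<inter> T))"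

definition nondegenerate :: "nat \<Rightarrow> nat \<Rightarrow> (nat \<Rightarrow> vec) \<Rightarrow> bool" where
  "nondegenerate n r v \<longleftrightarrow> (\<forall>x::nat \<Rightarrow> rat. \<exists>c::nat \<Rightarrow> rat.
     (\<forall>i<n. 0 \<le> c i) \<and> (\<forall>k<r. x k = (\<Sum>i<n. c i * of_int (v i k))))"

definition max_cones :: "nat set set \<Rightarrow> nat set set" where
  "max_cones Sig = {S\<in>Sig. \<forall>T\<in>Sig. S \<subseteq> T \<longrightarrow> T = S}"

text \<open>E = F^* = Z^n (torus-invariant Weil divisors) and P^*(M).\<close>
definition Elat :: "nat \<Rightarrow> vec set" where
  "Elat n = {a. \<forall>i\<ge>n. a i = 0}"

definition PstarM :: "nat \<Rightarrow> nat \<Rightarrow> (nat \<Rightarrow> vec) \<Rightarrow> vec set" where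
  "PstarM n r v = {(\<lambda>i. if i < n then dotp r m (v i) else 0) | m. True}"

definition ClZ :: "nat \<Rightarrow> nat \<Rightarrow> (nat \<Rightarrow> vec) \<Rightarrow> vec set set" where
  "ClZ n r v = cosets (Elat n) (PstarM n r v)"

definition CDiv :: "nat \<Rightarrow> nat \<Rightarrow> (nat \<Rightarrow> vec) \<Rightarrow> nat set set \<Rightarrow> vec set" where
  "CDiv n r v Sig = {a \<in> Elat n. \<forall>S\<in>Sig. \<exists>m. \<forall>i\<in>S. a i = dotp r m (v i)}"

definition PicZ :: "nat \<Rightarrow> nat \<Rightarrow> (nat \<Rightarrow> vec) \<Rightarrow> nat set set \<Rightarrow> vec set set" where
  "PicZ n r v Sig = cosets (CDiv n r v Sig) (PstarM n r v)"

text \<open>Local data for a cone sigma = cone(v_i : i \<in> S); F_sigma is indexed by S itself.\<close>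
definition Nsig :: "nat \<Rightarrow> (nat \<Rightarrow> vec) \<Rightarrow> nat set \<Rightarrow> vec set" where
  "Nsig r v S = {u. (\<forall>k\<ge>r. u k = 0) \<and>
     (\<exists>c::nat \<Rightarrow> rat. \<forall>k<r. of_int (u k) = (\<Sum>i\<in>S. c i * of_int (v i k)))}"

definition Nsig_dual :: "nat \<Rightarrow> (nat \<Rightarrow> vec) \<Rightarrow> nat set \<Rightarrow> (vec \<Rightarrow> int) set" where
  "Nsig_dual r v S = {phi. \<forall>x\<in>Nsig r v S. \<forall>y\<in>Nsig r v S. phi (x + y) = phi x + phi y}"

definition Fsig_dual :: "nat set \<Rightarrow> vec set" where
  "Fsig_dual S = {a. \<forall>i. i \<notin> S \<longrightarrow> a i = 0}"

definition Psig_star_img :: "nat \<Rightarrow> (nat \<Rightarrow> vec) \<Rightarrow> nat set \<Rightarrow> vec set" where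
  "Psig_star_img r v S = (\<lambda>phi. \<lambda>i. if i \<in> S then phi (v i) else 0) ` Nsig_dual r v S"

definition Ksig :: "nat \<Rightarrow> (nat \<Rightarrow> vec) \<Rightarrow> nat set \<Rightarrow> vec set set" where
  "Ksig r v S = cosets (Fsig_dual S) (Psig_star_img r v S)"

definition restr :: "nat set \<Rightarrow> vec \<Rightarrow> vec" where
  "restr S a = (\<lambda>i. if i \<in> S then a i else 0)"

definition pi_sig :: "nat \<Rightarrow> (nat \<Rightarrow> vec) \<Rightarrow> nat set \<Rightarrow> vec set \<Rightarrow> vec set" where
  "pi_sig r v S X = restr S ` X + Psig_star_img r v S"

text \<open>Direct sum over maximal cones (components outside Sigma_max are the zero coset {0}).\<close>
definition DirSumK :: "nat \<Rightarrow> (nat \<Rightarrow> vec) \<Rightarrow> nat set set \<Rightarrow> (nat set \<Rightarrow> vec set) set" where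
  "DirSumK r v Sig = {Phi. (\<forall>S\<in>max_cones Sig. Phi S \<in> Ksig r v S) \<and>
                          (\<forall>S. S \<notin> max_cones Sig \<longrightarrow> Phi S = 0)}"

definition piK :: "nat \<Rightarrow> (nat \<Rightarrow> vec) \<Rightarrow> nat set set \<Rightarrow> vec set \<Rightarrow> (nat set \<Rightarrow> vec set)" where
  "piK r v Sig X = (\<lambda>S. if S \<in> max_cones Sig then pi_sig r v S X else 0)"

definition Khat :: "nat \<Rightarrow> nat \<Rightarrow> (nat \<Rightarrow> vec) \<Rightarrow> nat set set \<Rightarrow> (nat set \<Rightarrow> vec set) set set" where
  "Khat n r v Sig = cosets (DirSumK r v Sig) (piK r v Sig ` ClZ n r v)"

end

(* Restricting a torus-invariant Weil divisor a in E to the maximal cones gives a homomorphism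
   g : E -> (direct sum of the K_sigma) whose image is pi(K).  Its kernel is the group of Cartier
   divisors: an additive map on the saturated lattice N_sigma = N /\ span(sigma) is the restriction
   of a linear form on N (split off a generator p with <m, p> = 1 and induct on the generators), so a
   divisor that is trivial in every K_sigma is given by a character on each maximal cone, hence on
   every cone.  Therefore [Cl : Pic] = [E : CDiv] = |pi(K)|, and Lagrange's theorem in the direct sum
   gives prod |K_sigma| = |hat K| * |pi(K)|.  Each K_sigma is finite because sigma is simplicial:
   dual vectors m_j with <m_j, v_i> = d_j delta_ij put d_j e_j into the image of P_sigma^*, so every
   class has a representative in a finite box. *)

theory Submission
  imports Defs "HOL-Algebra.Coset"
begin

definition add_subgroup :: "'a::ab_group_add set \<Rightarrow> bool" where
  "add_subgroup H \<longleftrightarrow> 0 \<in> H \<and> (\<forall>x\<in>H. \<forall>y\<in>H. x + y \<in> H) \<and> (\<forall>x\<in>H. - x \<in> H)"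

lemma add_subgroup_diff: "add_subgroup H \<Longrightarrow> x \<in> H \<Longrightarrow> y \<in> H \<Longrightarrow> x - y \<in> H"
  unfolding add_subgroup_def by (metis diff_conv_add_uminus)

lemma singleton_plus_eq_image: "{a} + B = (+) a ` B"
  by (auto simp: set_plus_def)

lemma singleton_plus_singleton: "{a} + {b} = {a + b}"
  by (simp add: set_plus_def)

lemma coset_absorb:
  assumes "add_subgroup H" "c \<in> H"
  shows "{c} + H = H"
proof
  show "{c} + H \<subseteq> H"
    using assms by (auto simp: add_subgroup_def singleton_plus_eq_image)
  show "H \<subseteq> {c} + H"
  proof
    fix h assume "h \<in> H"
    then have "h - c \<in> H" using add_subgroup_diff assms by blast
    then show "h \<in> {c} + H" unfolding singleton_plus_eq_image by (rule rev_image_eqI) simp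
  qed
qed

lemma coset_eq_iff:
  assumes "add_subgroup H"
  shows "{a} + H = {b} + H \<longleftrightarrow> a - b \<in> H"
proof
  assume "{a} + H = {b} + H"
  moreover have "a \<in> {a} + H"
    using assms unfolding add_subgroup_def singleton_plus_eq_image by force
  ultimately show "a - b \<in> H" by (auto simp: singleton_plus_eq_image)
next
  assume "a - b \<in> H"
  have "{a} + H = {b} + ({a - b} + H)"
    by (simp add: add.assoc[symmetric] singleton_plus_singleton)
  also have "\<dots> = {b} + H" using coset_absorb[OF assms \<open>a - b \<in> H\<close>] by simp
  finally show "{a} + H = {b} + H" .
qed

lemma subgroup_absorbs_subset:
  assumes "add_subgroup H" "X \<subseteq> H" "0 \<in> X"
  shows "X + H = H"
proof
  show "X + H \<subseteq> H"
    using assms(1,2) unfolding add_subgroup_def by (auto elim!: set_plus_elim)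
  show "H \<subseteq> X + H"
  proof
    fix h assume "h \<in> H"
    then have "0 + h \<in> X + H" using assms(3) by (rule set_plus_intro[rotated])
    then show "h \<in> X + H" by simp
  qed
qed

lemma coset_plus_coset:
  assumes "add_subgroup H"
  shows "({a} + H) + ({b} + H) = {a + b} + H"
proof -
  have "H + H = H"
    using assms by (rule subgroup_absorbs_subset) (use assms in \<open>simp_all add: add_subgroup_def\<close>)
  then show ?thesis by (metis add.assoc add.left_commute singleton_plus_singleton)
qed

lemma uminus_coset:
  assumes "add_subgroup H"
  shows "uminus ` ({a} + H) = {- a} + H"
proof -
  have "uminus ` H = H"
    using assms unfolding add_subgroup_def by (force intro: rev_image_eqI[of "- _"])
  have "uminus ` ({a} + H) = (+) (- a) ` uminus ` H"
    unfolding singleton_plus_eq_image image_image by simp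
  then show ?thesis
    using \<open>uminus ` H = H\<close> by (simp add: singleton_plus_eq_image)
qed

lemma add_subgroup_image:
  assumes A: "add_subgroup A" and f_add: "\<And>x y. x \<in> A \<Longrightarrow> y \<in> A \<Longrightarrow> f (x + y) = f x + f y"
  shows "add_subgroup (f ` A)"
proof -
  have A_ops: "0 \<in> A" "\<And>x y. x \<in> A \<Longrightarrow> y \<in> A \<Longrightarrow> x + y \<in> A" "\<And>x. x \<in> A \<Longrightarrow> - x \<in> A"
    using A unfolding add_subgroup_def by blast+
  have f_zero: "f 0 = 0"
    using f_add[of 0 0] A_ops(1) by simp
  have f_neg: "- f x = f (- x)" if "x \<in> A" for x
  proof -
    have "f x + f (- x) = 0"
      using f_add[of x "- x"] A_ops(3) that f_zero by simp
    then show ?thesis by (simp add: add_eq_0_iff)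
  qed
  have "0 \<in> f ` A"
    by (rule rev_image_eqI[where f = f, OF A_ops(1) f_zero[symmetric]])
  moreover have "f x + f y \<in> f ` A" if "x \<in> A" "y \<in> A" for x y
    by (rule rev_image_eqI[where f = f, OF A_ops(2)[OF that] f_add[OF that, symmetric]])
  moreover have "- f x \<in> f ` A" if "x \<in> A" for x
    by (rule rev_image_eqI[where f = f, OF A_ops(3)[OF that] f_neg[OF that]])
  ultimately show ?thesis unfolding add_subgroup_def by blast
qed

lemma add_subgroup_UNIV: "add_subgroup UNIV"
  unfolding add_subgroup_def by blast

lemma card_image_eq_if_same_fibres:
  assumes "\<And>a b. a \<in> E \<Longrightarrow> b \<in> E \<Longrightarrow> f a = f b \<longleftrightarrow> g a = g b"
  shows "card (f ` E) = card (g ` E)"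
proof -
  define h where "h y = g (inv_into E f y)" for y
  have hf: "h (f a) = g a" if "a \<in> E" for a
    using assms[of "inv_into E f (f a)" a] that by (simp add: h_def inv_into_into f_inv_into_f)
  then have "h ` f ` E = g ` E"
    unfolding image_image by (rule image_cong[OF refl])
  moreover have "inj_on h (f ` E)"
    by (auto simp: inj_on_def hf assms)
  ultimately show ?thesis by (metis card_image)
qed

lemma coset_of_cosets_eq_iff:
  assumes P: "add_subgroup P" and C: "add_subgroup C" and "P \<subseteq> C"
  shows "{{a} + P} + cosets C P = {{b} + P} + cosets C P \<longleftrightarrow> a - b \<in> C"
proof -
  have shape: "{{x} + P} + cosets C P = (\<lambda>c. {x + c} + P) ` C" for x
    unfolding cosets_def singleton_plus_eq_image[of "{x} + P"] image_image coset_plus_coset[OF P] ..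
  show ?thesis
  proof
    assume "{{a} + P} + cosets C P = {{b} + P} + cosets C P"
    moreover have "{a + 0} + P \<in> {{a} + P} + cosets C P"
      using C unfolding shape add_subgroup_def by blast
    ultimately obtain c where "c \<in> C" "{a} + P = {b + c} + P"
      unfolding shape by auto
    then have "c \<in> C" "a - (b + c) \<in> C"
      using coset_eq_iff[OF P] \<open>P \<subseteq> C\<close> by blast+
    then have "a - (b + c) + c \<in> C" using C unfolding add_subgroup_def by blast
    then show "a - b \<in> C" by simp
  next
    assume "a - b \<in> C"
    have "(\<lambda>c. {a + c} + P) ` C = (\<lambda>c. {b + c} + P) ` ((+) (a - b) ` C)"
      by (simp add: image_image add.assoc[symmetric])
    also have "(+) (a - b) ` C = C"
      using coset_absorb[OF C \<open>a - b \<in> C\<close>] by (simp add: singleton_plus_eq_image)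
    finally show "{{a} + P} + cosets C P = {{b} + P} + cosets C P"
      unfolding shape .
  qed
qed

lemma card_quotient_of_quotients:
  assumes "add_subgroup P" "add_subgroup C" "P \<subseteq> C"
    and "\<And>a b. a \<in> E \<Longrightarrow> b \<in> E \<Longrightarrow> g a = g b \<longleftrightarrow> a - b \<in> C"
  shows "card (cosets (cosets E P) (cosets C P)) = card (g ` E)"
proof -
  have "cosets (cosets E P) (cosets C P) = (\<lambda>a. {{a} + P} + cosets C P) ` E"
    unfolding cosets_def image_image ..
  then show ?thesis
    using card_image_eq_if_same_fibres[of E "\<lambda>a. {{a} + P} + cosets C P" g]
      coset_of_cosets_eq_iff[OF assms(1-3)] assms(4) by simp
qed

(* The unit e need not be 0: in a group of cosets it is the subgroup itself. *)
lemma card_cosets_mult_card_subgroup: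
  fixes D :: "'m::comm_monoid_add set" and e :: 'm
  defines "G \<equiv> \<lparr>carrier = D, mult = (+), one = e\<rparr>"
  assumes "group G" "subgroup H G"
  shows "card (cosets D H) * card H = card D"
proof -
  have "H #>\<^bsub>G\<^esub> a = {a} + H" for a
    unfolding r_coset_def singleton_plus_eq_image UNION_singleton_eq_range
    by (simp add: G_def add.commute)
  then have "rcosets\<^bsub>G\<^esub> H = cosets D H"
    unfolding RCOSETS_def cosets_def UNION_singleton_eq_range by (simp add: G_def)
  then show ?thesis
    using group.lagrange[OF assms(2,3)] by (simp add: order_def G_def)
qed

lemma subgroup_image_additive:
  fixes D :: "'m::comm_monoid_add set" and e :: 'm
  defines "G \<equiv> \<lparr>carrier = D, mult = (+), one = e\<rparr>"
  assumes "group G" "add_subgroup E" "g ` E \<subseteq> D" and g0: "g 0 = e"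
    and g_add: "\<And>a b. a \<in> E \<Longrightarrow> b \<in> E \<Longrightarrow> g (a + b) = g a + g b"
  shows "subgroup (g ` E) G"
proof (rule group.subgroupI[OF \<open>group G\<close>])
  have E: "0 \<in> E" "\<And>a. a \<in> E \<Longrightarrow> - a \<in> E" "\<And>a b. a \<in> E \<Longrightarrow> b \<in> E \<Longrightarrow> a + b \<in> E"
    using \<open>add_subgroup E\<close> unfolding add_subgroup_def by blast+
  show "g ` E \<subseteq> carrier G"
    using \<open>g ` E \<subseteq> D\<close> by (simp add: G_def)
  show "g ` E \<noteq> {}"
    using E(1) by blast
  show "inv\<^bsub>G\<^esub> x \<in> g ` E" if x: "x \<in> g ` E" for x
  proof -
    obtain a where a: "a \<in> E" "x = g a" using x by blast
    have "g (- a) + g a = e"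
      using g0 g_add[of "- a" a] E a by simp
    moreover have "g a \<in> D" "g (- a) \<in> D"
      using \<open>g ` E \<subseteq> D\<close> E a by auto
    ultimately have "inv\<^bsub>G\<^esub> x = g (- a)"
      using group.inv_equality[OF \<open>group G\<close>, of "g (- a)" "g a"] a by (simp add: G_def)
    then show ?thesis using E a by blast
  qed
  show "x \<otimes>\<^bsub>G\<^esub> y \<in> g ` E" if xy: "x \<in> g ` E" "y \<in> g ` E" for x y
  proof -
    obtain a b where "a \<in> E" "b \<in> E" "x = g a" "y = g b" using xy by blast
    then have "x \<otimes>\<^bsub>G\<^esub> y = g (a + b)" "a + b \<in> E" using E g_add by (simp_all add: G_def)
    then show ?thesis by blast
  qed
qed

lemma cosets_plus_closed:
  assumes G: "add_subgroup G" and H: "add_subgroup H" and "X \<in> cosets G H" "Y \<in> cosets G H"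
  shows "X + Y \<in> cosets G H"
proof -
  obtain a b where "a \<in> G" "b \<in> G" "X = {a} + H" "Y = {b} + H"
    using assms(3,4) unfolding cosets_def by blast
  then have "X + Y = {a + b} + H" "a + b \<in> G"
    using coset_plus_coset[OF H] G unfolding add_subgroup_def by simp_all
  then show ?thesis unfolding cosets_def by (intro image_eqI[where x = "a + b"]) simp_all
qed

lemma subgroup_in_cosets:
  fixes G H :: "'a::comm_monoid_add set"
  shows "0 \<in> G \<Longrightarrow> H \<in> cosets G H"
  unfolding cosets_def by (rule image_eqI[of _ _ 0]) simp_all

lemma subgroup_plus_coset:
  assumes "add_subgroup H" "X \<in> cosets G H"
  shows "H + X = X"
proof -
  obtain a where "X = {a} + H" using assms(2) unfolding cosets_def by blast
  then show ?thesis using coset_plus_coset[OF assms(1), of 0 a] by simp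
qed

lemma uminus_coset_in_cosets:
  assumes G: "add_subgroup G" and H: "add_subgroup H" and "X \<in> cosets G H"
  shows "uminus ` X \<in> cosets G H" "uminus ` X + X = H"
proof -
  obtain a where a: "a \<in> G" "X = {a} + H" using assms(3) unfolding cosets_def by blast
  then have "uminus ` X = {- a} + H" "- a \<in> G"
    using uminus_coset[OF H] G unfolding add_subgroup_def by simp_all
  then show "uminus ` X \<in> cosets G H" unfolding cosets_def by blast
  show "uminus ` X + X = H"
    using coset_plus_coset[OF H, of "- a" a] \<open>uminus ` X = {- a} + H\<close> a(2) by simp
qed

definition quotient_sum :: "'i set \<Rightarrow> ('i \<Rightarrow> 'a::ab_group_add set) \<Rightarrow> ('i \<Rightarrow> 'a set) \<Rightarrow> ('i \<Rightarrow> 'a set) set" where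
  "quotient_sum A G H = {Phi. (\<forall>i\<in>A. Phi i \<in> cosets (G i) (H i)) \<and> (\<forall>i. i \<notin> A \<longrightarrow> Phi i = 0)}"

lemma group_quotient_sum:
  assumes G: "\<And>i. i \<in> A \<Longrightarrow> add_subgroup (G i)" and H: "\<And>i. i \<in> A \<Longrightarrow> add_subgroup (H i)"
  shows "group \<lparr>carrier = quotient_sum A G H, mult = (+), one = (\<lambda>i. if i \<in> A then H i else 0)\<rparr>"
    (is "group ?G")
proof (rule groupI)
  show "x \<otimes>\<^bsub>?G\<^esub> y \<in> carrier ?G" if "x \<in> carrier ?G" "y \<in> carrier ?G" for x y
    using that cosets_plus_closed[OF G H] by (simp add: quotient_sum_def)
  have "H i \<in> cosets (G i) (H i)" if "i \<in> A" for i
    using G[OF that] by (intro subgroup_in_cosets) (simp add: add_subgroup_def)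
  then show "\<one>\<^bsub>?G\<^esub> \<in> carrier ?G"
    by (simp add: quotient_sum_def)
  show "x \<otimes>\<^bsub>?G\<^esub> y \<otimes>\<^bsub>?G\<^esub> z = x \<otimes>\<^bsub>?G\<^esub> (y \<otimes>\<^bsub>?G\<^esub> z)" for x y z
    by (simp add: add.assoc)
  show "\<one>\<^bsub>?G\<^esub> \<otimes>\<^bsub>?G\<^esub> x = x" if x: "x \<in> carrier ?G" for x
  proof -
    have "H i + x i = x i" if i: "i \<in> A" for i
      by (rule subgroup_plus_coset[OF H[OF i], of _ "G i"]) (use x i in \<open>simp add: quotient_sum_def\<close>)
    then show ?thesis using x by (simp add: quotient_sum_def fun_eq_iff)
  qed
  show "\<exists>y\<in>carrier ?G. y \<otimes>\<^bsub>?G\<^esub> x = \<one>\<^bsub>?G\<^esub>" if "x \<in> carrier ?G" for x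
  proof
    show "(\<lambda>i. uminus ` x i) \<in> carrier ?G"
      using that uminus_coset_in_cosets(1)[OF G H] by (simp add: quotient_sum_def)
    show "(\<lambda>i. uminus ` x i) \<otimes>\<^bsub>?G\<^esub> x = \<one>\<^bsub>?G\<^esub>"
      using that uminus_coset_in_cosets(2)[OF G H] by (simp add: quotient_sum_def fun_eq_iff)
  qed
qed

lemma card_quotient_sum:
  assumes "finite A"
  shows "card (quotient_sum A G H) = (\<Prod>i\<in>A. card (cosets (G i) (H i)))"
proof -
  define ext where "ext Phi i = (if i \<in> A then Phi i else 0)" for Phi :: "'a \<Rightarrow> 'b set" and i
  have "quotient_sum A G H = ext ` (\<Pi>\<^sub>E i\<in>A. cosets (G i) (H i))"
  proof (intro equalityI subsetI)
    fix Phi assume "Phi \<in> quotient_sum A G H"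
    then have "Phi = ext (restrict Phi A)" "restrict Phi A \<in> (\<Pi>\<^sub>E i\<in>A. cosets (G i) (H i))"
      unfolding quotient_sum_def ext_def by (auto simp: fun_eq_iff)
    then show "Phi \<in> ext ` (\<Pi>\<^sub>E i\<in>A. cosets (G i) (H i))" by blast
  qed (auto simp: quotient_sum_def ext_def)
  moreover have "inj_on ext (\<Pi>\<^sub>E i\<in>A. cosets (G i) (H i))"
  proof (rule inj_onI)
    fix Phi Psi assume "Phi \<in> (\<Pi>\<^sub>E i\<in>A. cosets (G i) (H i))" "Psi \<in> (\<Pi>\<^sub>E i\<in>A. cosets (G i) (H i))"
      and "ext Phi = ext Psi"
    moreover have "Phi i = Psi i" if "i \<in> A" for i
      using fun_cong[OF \<open>ext Phi = ext Psi\<close>, of i] that by (simp add: ext_def)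
    ultimately show "Phi = Psi" by (intro PiE_ext)
  qed
  ultimately show ?thesis
    using card_image card_PiE[OF assms] by metis
qed

definition additive_on :: "'a::plus set \<Rightarrow> ('a \<Rightarrow> 'b::plus) \<Rightarrow> bool" where
  "additive_on L phi \<longleftrightarrow> (\<forall>x\<in>L. \<forall>y\<in>L. phi (x + y) = phi x + phi y)"

definition lin_form :: "nat \<Rightarrow> (nat \<Rightarrow> 'b::comm_ring_1) \<Rightarrow> vec \<Rightarrow> 'b" where
  "lin_form r M u = (\<Sum>k<r. M k * of_int (u k))"

lemma lin_form_int_eq_dotp: "lin_form r m u = dotp r m u"
  by (simp add: lin_form_def dotp_def)

lemma dotp_add: "dotp r m (x + y) = dotp r m x + dotp r m y"
  by (simp add: dotp_def distrib_left sum.distrib)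

lemma dotp_add_left: "dotp r (m + m') x = dotp r m x + dotp r m' x"
  by (simp add: dotp_def distrib_right sum.distrib)

lemma dotp_uminus_left: "dotp r (- m) x = - dotp r m x"
  by (simp add: dotp_def sum_negf)

lemma dotp_of_combination:
  assumes "\<forall>k<r. of_int (u k) = (\<Sum>i\<in>I. c i * of_int (w i k))"
  shows "(of_int (dotp r m u) :: rat) = (\<Sum>i\<in>I. c i * of_int (dotp r m (w i)))"
proof -
  have "(of_int (dotp r m u) :: rat) = (\<Sum>k<r. of_int (m k) * (\<Sum>i\<in>I. c i * of_int (w i k)))"
    using assms by (simp add: dotp_def)
  also have "\<dots> = (\<Sum>i\<in>I. c i * of_int (dotp r m (w i)))"
    by (simp add: dotp_def sum_distrib_left sum.swap[of _ "{..<r}"] algebra_simps)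
  finally show ?thesis .
qed

lemma zero_in_Nsig: "0 \<in> Nsig r w I"
  unfolding Nsig_def by (auto intro!: exI[of _ "\<lambda>_. 0"])

lemma Nsig_add: "x \<in> Nsig r w I \<Longrightarrow> y \<in> Nsig r w I \<Longrightarrow> x + y \<in> Nsig r w I"
proof -
  assume "x \<in> Nsig r w I" "y \<in> Nsig r w I"
  then obtain c d :: "nat \<Rightarrow> rat"
    where "\<forall>k<r. of_int (x k) = (\<Sum>i\<in>I. c i * of_int (w i k))"
      and "\<forall>k<r. of_int (y k) = (\<Sum>i\<in>I. d i * of_int (w i k))"
      and "\<forall>k\<ge>r. x k = 0" "\<forall>k\<ge>r. y k = 0"
    unfolding Nsig_def by blast
  then show ?thesis
    unfolding Nsig_def
    by (auto intro!: exI[of _ "\<lambda>i. c i + d i"] simp: distrib_right sum.distrib)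
qed

lemma Nsig_scale: "x \<in> Nsig r w I \<Longrightarrow> (\<lambda>k. a * x k) \<in> Nsig r w I"
proof -
  assume "x \<in> Nsig r w I"
  then obtain c :: "nat \<Rightarrow> rat"
    where "\<forall>k<r. of_int (x k) = (\<Sum>i\<in>I. c i * of_int (w i k))" and "\<forall>k\<ge>r. x k = 0"
    unfolding Nsig_def by blast
  then show ?thesis
    unfolding Nsig_def
    by (auto intro!: exI[of _ "\<lambda>i. of_int a * c i"] simp: sum_distrib_left mult.assoc)
qed

lemma Nsig_empty: "Nsig r w {} = {0}"
  unfolding Nsig_def by (auto simp: fun_eq_iff) (meson not_le)

lemma sum_delta_mult:
  fixes x :: "'a \<Rightarrow> 'b::semiring_0"
  assumes "finite S" "i \<in> S"
  shows "(\<Sum>l\<in>S. (if l = i then c else 0) * x l) = c * x i"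
proof -
  have "(\<Sum>l\<in>S. (if l = i then c else 0) * x l) = (\<Sum>l\<in>S. if l = i then c * x l else 0)"
    by (rule sum.cong) auto
  then show ?thesis using assms by simp
qed

lemma generator_in_Nsig:
  assumes "finite S" "i \<in> S" "\<forall>k\<ge>r. w i k = 0"
  shows "w i \<in> Nsig r w S"
proof -
  have "of_int (w i k) = (\<Sum>l\<in>S. (if l = i then 1 else 0) * (of_int (w l k) :: rat))" for k
    by (subst sum_delta_mult[OF assms(1,2)]) simp
  then show ?thesis
    using assms(3) unfolding Nsig_def by (auto intro!: exI[of _ "\<lambda>l. if l = i then 1 else 0"])
qed

lemma additive_on_Nsig_zero:
  fixes phi :: "vec \<Rightarrow> 'b::cancel_comm_monoid_add"
  assumes "additive_on (Nsig r w I) phi"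
  shows "phi 0 = 0"
  using assms zero_in_Nsig[of r w I] unfolding additive_on_def
  by (metis add.right_neutral add_left_cancel)

lemma additive_on_Nsig_scale:
  fixes phi :: "vec \<Rightarrow> 'b::comm_ring_1"
  assumes phi: "additive_on (Nsig r w I) phi" and x: "x \<in> Nsig r w I"
  shows "phi (\<lambda>k. a * x k) = of_int a * phi x"
proof -
  have add: "phi (y + z) = phi y + phi z" if "y \<in> Nsig r w I" "z \<in> Nsig r w I" for y z
    using phi that unfolding additive_on_def by blast
  have nat: "phi (\<lambda>k. int n * x k) = of_nat n * phi x" for n
  proof (induction n)
    case 0
    then show ?case using additive_on_Nsig_zero[OF phi] by (simp add: zero_fun_def)
  next
    case (Suc n)
    have "(\<lambda>k. int (Suc n) * x k) = (\<lambda>k. int n * x k) + x"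
      by (auto simp: fun_eq_iff algebra_simps)
    then show ?case
      using Suc add[OF Nsig_scale[OF x] x] by (simp add: algebra_simps)
  qed
  show ?thesis
  proof (cases "a \<ge> 0")
    case True
    then show ?thesis using nat[of "nat a"] by simp
  next
    case False
    have "(\<lambda>k. int (nat (- a)) * x k) + (\<lambda>k. a * x k) = 0"
      using False by (auto simp: fun_eq_iff)
    then have "phi (\<lambda>k. int (nat (- a)) * x k) + phi (\<lambda>k. a * x k) = 0"
      using add[OF Nsig_scale[OF x] Nsig_scale[OF x]] additive_on_Nsig_zero[OF phi] by metis
    then show ?thesis
      using nat[of "nat (- a)"] False by (simp add: add_eq_0_iff)
  qed
qed

lemma exists_dotp_dvd_coordinates: "\<exists>m. \<forall>k<r. dotp r m x dvd x k"
proof (induction r)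
  case 0
  then show ?case by simp
next
  case (Suc r)
  then obtain m where m: "\<forall>k<r. dotp r m x dvd x k" by blast
  obtain s t where st: "s * dotp r m x + t * x r = gcd (dotp r m x) (x r)"
    using bezout_int by blast
  define m' where "m' k = (if k = r then t else s * m k)" for k
  have "dotp (Suc r) m' x = s * dotp r m x + t * x r"
    by (simp add: dotp_def m'_def sum_distrib_left mult.assoc)
  then have "dotp (Suc r) m' x = gcd (dotp r m x) (x r)"
    using st by simp
  moreover have "gcd (dotp r m x) (x r) dvd x k" if "k < Suc r" for k
    using m that by (metis dvd_trans gcd_dvd1 gcd_dvd2 less_Suc_eq)
  ultimately show ?case by metis
qed

lemma vec_eq_multiple_of_primitive:
  assumes "\<exists>k<r. x k \<noteq> 0"
  shows "\<exists>g p m. g \<noteq> 0 \<and> (\<forall>k<r. x k = g * p k) \<and> (\<forall>k\<ge>r. p k = 0) \<and> dotp r m p = 1"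
proof -
  obtain m where m: "\<forall>k<r. dotp r m x dvd x k"
    using exists_dotp_dvd_coordinates by blast
  define g where "g = dotp r m x"
  define p where "p k = (if k < r then x k div g else 0)" for k
  have "g \<noteq> 0" using m assms by (auto simp: g_def)
  moreover have x: "\<forall>k<r. x k = g * p k" using m by (simp add: g_def p_def)
  moreover have "\<forall>k\<ge>r. p k = 0" by (simp add: p_def)
  moreover have "dotp r m x = g * dotp r m p"
    using x by (simp add: dotp_def sum_distrib_left algebra_simps)
  then have "dotp r m p = 1" using \<open>g \<noteq> 0\<close> by (simp add: g_def)
  ultimately show ?thesis by blast
qed

lemma Nsig_insert_zero_generator:
  assumes "finite I" "j \<notin> I" "\<forall>k<r. w j k = 0"
  shows "Nsig r w (insert j I) = Nsig r w I"
  using assms unfolding Nsig_def by simp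

definition project_along :: "nat \<Rightarrow> vec \<Rightarrow> vec \<Rightarrow> vec \<Rightarrow> vec" where
  "project_along r m p u = (\<lambda>k. u k - dotp r m u * p k)"

(* Induction step of additive_on_Nsig_is_lin_form: for w j = g * p with <m, p> = 1, the projection
   along p onto the kernel of m maps Nsig r w (insert j I) into the lattice of the projected
   generators indexed by I. *)
context
  fixes r :: nat and w :: "nat \<Rightarrow> vec" and I :: "nat set" and j :: nat and g :: int and m p :: vec
  assumes finite_I: "finite I" and j_notin_I: "j \<notin> I" and g_nonzero: "g \<noteq> 0"
    and w_j: "\<forall>k<r. w j k = g * p k" and p_vanishes: "\<forall>k\<ge>r. p k = 0" and dotp_m_p: "dotp r m p = 1"
begin

private lemma dotp_m_w_j: "dotp r m (w j) = g"
proof -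
  have "dotp r m (w j) = g * dotp r m p"
    using w_j by (simp add: dotp_def sum_distrib_left algebra_simps)
  then show ?thesis using dotp_m_p by simp
qed

private lemma sum_projected_generators:
  "(\<Sum>i\<in>I. c i * of_int (project_along r m p (w i) k)) =
     (\<Sum>i\<in>I. c i * of_int (w i k)) - (\<Sum>i\<in>I. c i * of_int (dotp r m (w i))) * (of_int (p k) :: rat)"
  by (simp add: project_along_def sum_subtractf sum_distrib_right right_diff_distrib mult.assoc)

lemma in_Nsig_insert_generator: "p \<in> Nsig r w (insert j I)"
proof -
  define c :: "nat \<Rightarrow> rat" where "c i = (if i = j then 1 / of_int g else 0)" for i
  have "of_int (p k) = (\<Sum>i\<in>insert j I. c i * of_int (w i k))" if "k < r" for k
  proof -
    have "(\<Sum>i\<in>insert j I. c i * of_int (w i k)) = 1 / of_int g * of_int (w j k)"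
      unfolding c_def by (rule sum_delta_mult) (use finite_I in auto)
    then show ?thesis using w_j that g_nonzero by simp
  qed
  then show ?thesis using p_vanishes unfolding Nsig_def by blast
qed

lemma Nsig_projected_subset: "Nsig r (\<lambda>i. project_along r m p (w i)) I \<subseteq> Nsig r w (insert j I)"
proof
  fix u assume "u \<in> Nsig r (\<lambda>i. project_along r m p (w i)) I"
  then obtain c :: "nat \<Rightarrow> rat"
    where c: "\<forall>k<r. of_int (u k) = (\<Sum>i\<in>I. c i * of_int (project_along r m p (w i) k))"
      and u_vanishes: "\<forall>k\<ge>r. u k = 0"
    unfolding Nsig_def by blast
  define T where "T = (\<Sum>i\<in>I. c i * of_int (dotp r m (w i)))"
  define c' where "c' = c(j := - T / of_int g)"
  have "of_int (u k) = (\<Sum>i\<in>insert j I. c' i * of_int (w i k))" if "k < r" for k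
  proof -
    have "(\<Sum>i\<in>I. c' i * of_int (w i k)) = (\<Sum>i\<in>I. c i * of_int (w i k))"
      unfolding c'_def using j_notin_I by (intro sum.cong) auto
    moreover have "c' j * of_int (w j k) = - T * of_int (p k)"
      unfolding c'_def using w_j that g_nonzero by simp
    ultimately show ?thesis
      using c that finite_I j_notin_I unfolding sum_projected_generators T_def by simp
  qed
  then show "u \<in> Nsig r w (insert j I)"
    using u_vanishes unfolding Nsig_def by blast
qed

lemma project_along_in_Nsig:
  assumes "u \<in> Nsig r w (insert j I)"
  shows "project_along r m p u \<in> Nsig r (\<lambda>i. project_along r m p (w i)) I"
proof -
  obtain c :: "nat \<Rightarrow> rat"
    where c: "\<forall>k<r. of_int (u k) = (\<Sum>i\<in>insert j I. c i * of_int (w i k))"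
      and u_vanishes: "\<forall>k\<ge>r. u k = 0"
    using assms unfolding Nsig_def by blast
  define T where "T = (\<Sum>i\<in>I. c i * of_int (dotp r m (w i)))"
  have dotp_u: "of_int (dotp r m u) = c j * of_int g + T"
    using dotp_of_combination[OF c, of m] finite_I j_notin_I dotp_m_w_j by (simp add: T_def)
  have "of_int (project_along r m p u k) = (\<Sum>i\<in>I. c i * of_int (project_along r m p (w i) k))"
    if "k < r" for k
  proof -
    have "of_int (u k) = c j * of_int g * of_int (p k) + (\<Sum>i\<in>I. c i * (of_int (w i k) :: rat))"
      using c w_j that finite_I j_notin_I by simp
    then show ?thesis
      unfolding sum_projected_generators T_def[symmetric]
      by (simp add: project_along_def dotp_u algebra_simps)
  qed
  moreover have "\<forall>k\<ge>r. project_along r m p u k = 0"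
    using u_vanishes p_vanishes by (simp add: project_along_def)
  ultimately show ?thesis unfolding Nsig_def by blast
qed

end

lemma additive_on_Nsig_extend:
  fixes phi :: "vec \<Rightarrow> 'b::comm_ring_1"
  assumes phi: "additive_on (Nsig r w J) phi" and p: "p \<in> Nsig r w J"
    and L': "L' \<subseteq> Nsig r w J" "\<And>u. u \<in> Nsig r w J \<Longrightarrow> project_along r m p u \<in> L'"
    and M': "\<And>u. u \<in> L' \<Longrightarrow> lin_form r M' u = phi u"
    and u: "u \<in> Nsig r w J"
  shows "lin_form r (\<lambda>k. M' k + (phi p - lin_form r M' p) * of_int (m k)) u = phi u"
proof -
  define t where "t = dotp r m u"
  have "u = project_along r m p u + (\<lambda>k. t * p k)"
    by (simp add: project_along_def t_def fun_eq_iff)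
  moreover have "project_along r m p u \<in> Nsig r w J" "(\<lambda>k. t * p k) \<in> Nsig r w J"
    using L' u Nsig_scale[OF p] by blast+
  ultimately have "phi u = phi (project_along r m p u) + phi (\<lambda>k. t * p k)"
    using phi unfolding additive_on_def by metis
  also have "\<dots> = lin_form r M' (project_along r m p u) + of_int t * phi p"
    using M' L'(2)[OF u] additive_on_Nsig_scale[OF phi p] by simp
  also have "lin_form r M' (project_along r m p u) = lin_form r M' u - of_int t * lin_form r M' p"
    by (simp add: lin_form_def project_along_def t_def algebra_simps sum_subtractf sum_distrib_left)
  finally have "phi u = lin_form r M' u + of_int t * (phi p - lin_form r M' p)"
    by (simp add: algebra_simps)
  moreover have "lin_form r (\<lambda>k. M' k + (phi p - lin_form r M' p) * of_int (m k)) u =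
      lin_form r M' u + (phi p - lin_form r M' p) * of_int t"
    by (simp add: lin_form_def t_def dotp_def distrib_right sum.distrib sum_distrib_left mult.assoc)
  ultimately show ?thesis by (simp add: mult.commute)
qed

theorem additive_on_Nsig_is_lin_form:
  fixes phi :: "vec \<Rightarrow> 'b::comm_ring_1"
  assumes "finite I" "additive_on (Nsig r w I) phi"
  shows "\<exists>M. \<forall>u\<in>Nsig r w I. lin_form r M u = phi u"
  using assms
proof (induction I arbitrary: w phi rule: finite_induct)
  case empty
  then show ?case
    using additive_on_Nsig_zero[OF empty.prems] by (intro exI[of _ 0]) (simp add: Nsig_empty lin_form_def)
next
  case (insert j I)
  show ?case
  proof (cases "\<forall>k<r. w j k = 0")
    case True
    then show ?thesis
      using insert.IH insert.prems Nsig_insert_zero_generator[where w = w, OF insert.hyps True] by simp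
  next
    case False
    then obtain g p m where "g \<noteq> 0" "\<forall>k<r. w j k = g * p k" "\<forall>k\<ge>r. p k = 0" "dotp r m p = 1"
      using vec_eq_multiple_of_primitive[of r "w j"] by auto
    note split = insert.hyps(1,2) this
    define L' where "L' = Nsig r (\<lambda>i. project_along r m p (w i)) I"
    have "additive_on L' phi"
      using insert.prems Nsig_projected_subset[where w = w, OF split] unfolding additive_on_def L'_def by blast
    then obtain M' where M': "\<forall>u\<in>L'. lin_form r M' u = phi u"
      using insert.IH unfolding L'_def by blast
    have "lin_form r (\<lambda>k. M' k + (phi p - lin_form r M' p) * of_int (m k)) u = phi u"
      if "u \<in> Nsig r w (insert j I)" for u
    proof (rule additive_on_Nsig_extend[OF insert.prems in_Nsig_insert_generator[where w = w, OF split]])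
      show "L' \<subseteq> Nsig r w (insert j I)"
        unfolding L'_def by (rule Nsig_projected_subset[where w = w, OF split])
      show "project_along r m p u \<in> L'" if "u \<in> Nsig r w (insert j I)" for u
        unfolding L'_def using that by (rule project_along_in_Nsig[where w = w, OF split])
    qed (use M' that in auto)
    then show ?thesis by blast
  qed
qed

lemma clear_denominators:
  fixes M :: "nat \<Rightarrow> rat"
  shows "\<exists>d::int. d > 0 \<and> (\<exists>m::vec. \<forall>k<r. of_int (m k) = of_int d * M k)"
proof (induction r)
  case 0
  then show ?case by (intro exI[of _ 1]) auto
next
  case (Suc r)
  then obtain d m where dm: "d > 0" "\<forall>k<r. of_int (m k) = of_int d * M k" by blast
  obtain a b where ab: "quotient_of (M r) = (a, b)" by fastforce
  then have b: "b > 0" "M r = of_int a / of_int b"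
    using quotient_of_denom_pos quotient_of_div by blast+
  define m' where "m' k = (if k = r then d * a else b * m k)" for k
  have "of_int (m' k) = of_int (d * b) * M k" if "k < Suc r" for k
  proof (cases "k = r")
    case True
    then show ?thesis using b by (simp add: m'_def)
  next
    case False
    then have "of_int (m k) = of_int d * M k" using dm(2) that by simp
    then show ?thesis using False by (simp add: m'_def)
  qed
  then show ?case using dm b by (intro exI[of _ "d * b"]) auto
qed

lemma lin_indep_Q_coefficients_unique:
  assumes "lin_indep_Q r v S" "i \<in> S"
    and "\<forall>k<r. (\<Sum>l\<in>S. c l * of_int (v l k)) = (\<Sum>l\<in>S. c' l * (of_int (v l k) :: rat))"
  shows "c i = c' i"
proof -
  have "\<forall>k<r. (\<Sum>l\<in>S. (c l - c' l) * of_int (v l k)) = (0::rat)"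
    using assms(3) by (simp add: left_diff_distrib sum_subtractf)
  then show ?thesis using assms(1,2) unfolding lin_indep_Q_def by fastforce
qed

definition Nsig_coord :: "nat \<Rightarrow> (nat \<Rightarrow> vec) \<Rightarrow> nat set \<Rightarrow> vec \<Rightarrow> nat \<Rightarrow> rat" where
  "Nsig_coord r v S u = (SOME c. \<forall>k<r. of_int (u k) = (\<Sum>i\<in>S. c i * of_int (v i k)))"

lemma Nsig_coord_combination:
  assumes "u \<in> Nsig r v S"
  shows "\<forall>k<r. of_int (u k) = (\<Sum>i\<in>S. Nsig_coord r v S u i * of_int (v i k))"
proof -
  have "\<exists>c :: nat \<Rightarrow> rat. \<forall>k<r. of_int (u k) = (\<Sum>i\<in>S. c i * of_int (v i k))"
    using assms unfolding Nsig_def by blast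
  from someI_ex[OF this] show ?thesis unfolding Nsig_coord_def .
qed

lemma Nsig_coord_add:
  assumes indep: "lin_indep_Q r v S" and j: "j \<in> S" and xy: "x \<in> Nsig r v S" "y \<in> Nsig r v S"
  shows "Nsig_coord r v S (x + y) j = Nsig_coord r v S x j + Nsig_coord r v S y j"
proof -
  have "\<forall>k<r. (\<Sum>i\<in>S. Nsig_coord r v S (x + y) i * of_int (v i k)) =
      (\<Sum>i\<in>S. (Nsig_coord r v S x i + Nsig_coord r v S y i) * of_int (v i k))"
  proof (intro allI impI)
    fix k assume "k < r"
    have "(\<Sum>i\<in>S. Nsig_coord r v S (x + y) i * of_int (v i k)) = of_int ((x + y) k)"
      using Nsig_coord_combination[OF Nsig_add[OF xy]] \<open>k < r\<close> by simp
    also have "\<dots> = (\<Sum>i\<in>S. Nsig_coord r v S x i * of_int (v i k)) + (\<Sum>i\<in>S. Nsig_coord r v S y i * of_int (v i k))"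
      using Nsig_coord_combination[OF xy(1)] Nsig_coord_combination[OF xy(2)] \<open>k < r\<close> by simp
    finally show "(\<Sum>i\<in>S. Nsig_coord r v S (x + y) i * of_int (v i k)) =
        (\<Sum>i\<in>S. (Nsig_coord r v S x i + Nsig_coord r v S y i) * of_int (v i k))"
      by (simp add: distrib_right sum.distrib)
  qed
  from lin_indep_Q_coefficients_unique[OF indep j this] show ?thesis by simp
qed

lemma Nsig_coord_generator:
  assumes fin: "finite S" and indep: "lin_indep_Q r v S" and i: "i \<in> S" and j: "j \<in> S"
    and v_i: "v i \<in> Nsig r v S"
  shows "Nsig_coord r v S (v i) j = (if i = j then 1 else 0)"
proof -
  have "\<forall>k<r. (\<Sum>l\<in>S. Nsig_coord r v S (v i) l * of_int (v l k)) =
      (\<Sum>l\<in>S. (if l = i then 1 else 0) * (of_int (v l k) :: rat))"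
  proof (intro allI impI)
    fix k assume "k < r"
    have "(\<Sum>l\<in>S. (if l = i then 1 else 0) * (of_int (v l k) :: rat)) = of_int (v i k)"
      by (subst sum_delta_mult[OF fin i]) simp
    then show "(\<Sum>l\<in>S. Nsig_coord r v S (v i) l * of_int (v l k)) =
        (\<Sum>l\<in>S. (if l = i then 1 else 0) * (of_int (v l k) :: rat))"
      using Nsig_coord_combination[OF v_i] \<open>k < r\<close> by simp
  qed
  from lin_indep_Q_coefficients_unique[OF indep j this] show ?thesis by simp
qed

lemma lin_indep_Q_rational_dual_vector:
  assumes fin: "finite S" and indep: "lin_indep_Q r v S" and v_vanishes: "\<forall>i\<in>S. \<forall>k\<ge>r. v i k = 0"
    and j: "j \<in> S"
  shows "\<exists>M :: nat \<Rightarrow> rat. \<forall>i\<in>S. lin_form r M (v i) = (if i = j then 1 else 0)"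
proof -
  have "additive_on (Nsig r v S) (\<lambda>u. Nsig_coord r v S u j)"
    unfolding additive_on_def using Nsig_coord_add[OF indep j] by blast
  then obtain M :: "nat \<Rightarrow> rat" where M: "\<forall>u\<in>Nsig r v S. lin_form r M u = Nsig_coord r v S u j"
    using additive_on_Nsig_is_lin_form[OF fin] by blast
  have "lin_form r M (v i) = (if i = j then 1 else 0)" if i: "i \<in> S" for i
  proof -
    have "v i \<in> Nsig r v S"
      using generator_in_Nsig[of S i r v] fin i v_vanishes by blast
    then show ?thesis using M Nsig_coord_generator[OF fin indep i j] by simp
  qed
  then show ?thesis by blast
qed

lemma lin_indep_Q_dual_vector:
  assumes "finite S" "lin_indep_Q r v S" "\<forall>i\<in>S. \<forall>k\<ge>r. v i k = 0" "j \<in> S"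
  shows "\<exists>d>0. \<exists>m. \<forall>i\<in>S. dotp r m (v i) = (if i = j then d else 0)"
proof -
  obtain M :: "nat \<Rightarrow> rat" where M: "\<forall>i\<in>S. lin_form r M (v i) = (if i = j then 1 else 0)"
    using lin_indep_Q_rational_dual_vector[OF assms] by blast
  obtain d m where dm: "d > 0" "\<forall>k<r. of_int (m k) = of_int d * M k"
    using clear_denominators by blast
  have "dotp r m (v i) = (if i = j then d else 0)" if "i \<in> S" for i
  proof -
    have "(of_int (dotp r m (v i)) :: rat) = of_int d * lin_form r M (v i)"
      using dm(2) by (simp add: dotp_def lin_form_def sum_distrib_left mult.assoc)
    also have "\<dots> = of_int (if i = j then d else 0)"
      using M that by simp
    finally show ?thesis by (simp only: of_int_eq_iff)
  qed
  then show ?thesis using dm(1) by blast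
qed

lemma add_subgroup_Elat: "add_subgroup (Elat n)"
  unfolding add_subgroup_def Elat_def by auto

lemma add_subgroup_PstarM: "add_subgroup (PstarM n r v)"
proof -
  have "PstarM n r v = range (\<lambda>m. \<lambda>i. if i < n then dotp r m (v i) else 0)"
    unfolding PstarM_def by blast
  moreover have "add_subgroup (range (\<lambda>m. \<lambda>i. if i < n then dotp r m (v i) else 0))"
    by (rule add_subgroup_image[OF add_subgroup_UNIV]) (simp add: fun_eq_iff dotp_add_left)
  ultimately show ?thesis by simp
qed

lemma add_subgroup_CDiv: "add_subgroup (CDiv n r v Sig)"
proof -
  have E: "add_subgroup (Elat n)" by (rule add_subgroup_Elat)
  have "\<forall>i\<in>S. (0 :: vec) i = dotp r 0 (v i)" for S
    by (simp add: dotp_def)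
  then have "0 \<in> CDiv n r v Sig"
    using E unfolding CDiv_def add_subgroup_def by blast
  moreover have "x + y \<in> CDiv n r v Sig" if "x \<in> CDiv n r v Sig" "y \<in> CDiv n r v Sig" for x y
  proof -
    have "\<exists>m. \<forall>i\<in>S. (x + y) i = dotp r m (v i)" if S: "S \<in> Sig" for S
    proof -
      obtain m\<^sub>1 m\<^sub>2 where "\<forall>i\<in>S. x i = dotp r m\<^sub>1 (v i)" "\<forall>i\<in>S. y i = dotp r m\<^sub>2 (v i)"
        using \<open>x \<in> CDiv n r v Sig\<close> \<open>y \<in> CDiv n r v Sig\<close> S unfolding CDiv_def by blast
      then have "\<forall>i\<in>S. (x + y) i = dotp r (m\<^sub>1 + m\<^sub>2) (v i)" by (simp add: dotp_add_left)
      then show ?thesis by blast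
    qed
    moreover have "x + y \<in> Elat n"
      using that E unfolding CDiv_def add_subgroup_def by blast
    ultimately show ?thesis unfolding CDiv_def by blast
  qed
  moreover have "- x \<in> CDiv n r v Sig" if "x \<in> CDiv n r v Sig" for x
  proof -
    have "\<exists>m. \<forall>i\<in>S. (- x) i = dotp r m (v i)" if S: "S \<in> Sig" for S
    proof -
      obtain m where "\<forall>i\<in>S. x i = dotp r m (v i)"
        using \<open>x \<in> CDiv n r v Sig\<close> S unfolding CDiv_def by blast
      then have "\<forall>i\<in>S. (- x) i = dotp r (- m) (v i)" by (simp add: dotp_uminus_left)
      then show ?thesis by blast
    qed
    moreover have "- x \<in> Elat n"
      using that E unfolding CDiv_def add_subgroup_def by blast
    ultimately show ?thesis unfolding CDiv_def by blast
  qed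
  ultimately show ?thesis unfolding add_subgroup_def by blast
qed

lemma PstarM_subset_CDiv:
  assumes "Sig \<subseteq> Pow {..<n}"
  shows "PstarM n r v \<subseteq> CDiv n r v Sig"
proof
  fix x assume "x \<in> PstarM n r v"
  then obtain m where x: "x = (\<lambda>i. if i < n then dotp r m (v i) else 0)"
    unfolding PstarM_def by blast
  have "\<forall>i\<in>S. x i = dotp r m (v i)" if "S \<in> Sig" for S
    using assms that x by auto
  moreover have "x \<in> Elat n" unfolding Elat_def x by simp
  ultimately show "x \<in> CDiv n r v Sig" unfolding CDiv_def by blast
qed

lemma add_subgroup_Fsig_dual: "add_subgroup (Fsig_dual S)"
  unfolding add_subgroup_def Fsig_dual_def by auto

lemma add_subgroup_Psig_star_img: "add_subgroup (Psig_star_img r v S)"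
  unfolding Psig_star_img_def
proof (rule add_subgroup_image)
  show "add_subgroup (Nsig_dual r v S)"
    unfolding add_subgroup_def Nsig_dual_def by (simp add: algebra_simps)
qed (auto simp: fun_eq_iff)

lemma character_in_Psig_star_img: "(\<lambda>i. if i \<in> S then dotp r m (v i) else 0) \<in> Psig_star_img r v S"
proof -
  have "dotp r m \<in> Nsig_dual r v S" unfolding Nsig_dual_def by (simp add: dotp_add)
  then show ?thesis unfolding Psig_star_img_def by blast
qed

lemma restr_add: "restr S (a + b) = restr S a + restr S b"
  by (auto simp: restr_def fun_eq_iff)

lemma restr_diff: "restr S (a - b) = restr S a - restr S b"
  by (auto simp: restr_def fun_eq_iff)

lemma restr_zero: "restr S 0 = 0"
  by (auto simp: restr_def fun_eq_iff)

lemma restr_in_Fsig_dual: "restr S a \<in> Fsig_dual S"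
  unfolding restr_def Fsig_dual_def by auto

lemma pi_sig_coset:
  assumes "S \<subseteq> {..<n}"
  shows "pi_sig r v S ({a} + PstarM n r v) = {restr S a} + Psig_star_img r v S"
proof -
  have "restr S ` PstarM n r v \<subseteq> Psig_star_img r v S"
  proof
    fix x assume "x \<in> restr S ` PstarM n r v"
    then obtain m where "x = restr S (\<lambda>i. if i < n then dotp r m (v i) else 0)"
      unfolding PstarM_def by blast
    then have "x = (\<lambda>i. if i \<in> S then dotp r m (v i) else 0)"
      using assms by (auto simp: restr_def fun_eq_iff)
    then show "x \<in> Psig_star_img r v S" using character_in_Psig_star_img by simp
  qed
  moreover have "0 \<in> restr S ` PstarM n r v"
    using add_subgroup_PstarM[of n r v] restr_zero[of S] unfolding add_subgroup_def by (metis image_eqI)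
  ultimately have "restr S ` PstarM n r v + Psig_star_img r v S = Psig_star_img r v S"
    by (rule subgroup_absorbs_subset[OF add_subgroup_Psig_star_img])
  moreover have "restr S ` ({a} + PstarM n r v) = {restr S a} + restr S ` PstarM n r v"
    by (simp add: singleton_plus_eq_image image_image restr_add)
  ultimately show ?thesis
    unfolding pi_sig_def by (simp add: add.assoc)
qed

lemma max_cones_cover:
  assumes "finite Sig" "S \<in> Sig"
  shows "\<exists>T\<in>max_cones Sig. S \<subseteq> T"
proof -
  obtain T where "T \<in> Sig" "S \<subseteq> T" "\<forall>T'\<in>Sig. T \<subseteq> T' \<longrightarrow> T = T'"
    using finite_has_maximal2[OF assms] by blast
  then have "T \<in> max_cones Sig" unfolding max_cones_def by auto
  with \<open>S \<subseteq> T\<close> show ?thesis by blast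
qed

lemma minus_mod_in_Psig_star_img:
  assumes fin: "finite S" and a: "a \<in> Fsig_dual S"
    and dual: "\<And>j. j \<in> S \<Longrightarrow> \<forall>i\<in>S. dotp r (m j) (v i) = (if i = j then d j else 0)"
  shows "a - (\<lambda>i. if i \<in> S then a i mod d i else 0) \<in> Psig_star_img r v S"
proof -
  define phi where "phi x = (\<Sum>j\<in>S. (a j div d j) * dotp r (m j) x)" for x
  have "phi \<in> Nsig_dual r v S"
    unfolding Nsig_dual_def phi_def by (simp add: dotp_add distrib_left sum.distrib)
  moreover have "a - (\<lambda>i. if i \<in> S then a i mod d i else 0) = (\<lambda>i. if i \<in> S then phi (v i) else 0)"
  proof
    fix i show "(a - (\<lambda>i. if i \<in> S then a i mod d i else 0)) i = (if i \<in> S then phi (v i) else 0)"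
    proof (cases "i \<in> S")
      case True
      have "phi (v i) = (\<Sum>j\<in>S. (a j div d j) * (if i = j then d j else 0))"
        unfolding phi_def using dual True by simp
      also have "\<dots> = a i - a i mod d i"
        using fin True by (simp add: if_distrib minus_mod_eq_div_mult cong: if_cong)
      finally show ?thesis using True by simp
    next
      case False
      then show ?thesis using a by (simp add: Fsig_dual_def)
    qed
  qed
  ultimately show ?thesis unfolding Psig_star_img_def by blast
qed

lemma finite_Ksig:
  assumes fin: "finite S" and "lin_indep_Q r v S" "\<forall>i\<in>S. \<forall>k\<ge>r. v i k = 0"
  shows "finite (Ksig r v S)"
proof -
  obtain d m where dm: "\<And>j. j \<in> S \<Longrightarrow> d j > 0 \<and> (\<forall>i\<in>S. dotp r (m j) (v i) = (if i = j then d j else 0))"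
    using lin_indep_Q_dual_vector[OF assms] by metis
  define box where "box = {b :: vec. \<forall>i. (i \<in> S \<longrightarrow> b i \<in> (\<Union>j\<in>S. {0..<d j})) \<and> (i \<notin> S \<longrightarrow> b i = 0)}"
  have "finite box"
    unfolding box_def using fin by (intro finite_set_of_finite_funs) auto
  moreover have "Ksig r v S \<subseteq> (\<lambda>b. {b} + Psig_star_img r v S) ` box"
  proof
    fix X assume "X \<in> Ksig r v S"
    then obtain a where a: "a \<in> Fsig_dual S" "X = {a} + Psig_star_img r v S"
      unfolding Ksig_def cosets_def by blast
    define b where "b i = (if i \<in> S then a i mod d i else 0)" for i
    have "a - b \<in> Psig_star_img r v S"
      unfolding b_def using minus_mod_in_Psig_star_img[OF fin a(1)] dm by blast
    then have "X = {b} + Psig_star_img r v S"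
      using a(2) coset_eq_iff[OF add_subgroup_Psig_star_img] by blast
    moreover have "b \<in> box"
      unfolding box_def b_def using dm by (auto intro: pos_mod_bound)
    ultimately show "X \<in> (\<lambda>b. {b} + Psig_star_img r v S) ` box" by blast
  qed
  ultimately show ?thesis by (rule finite_surj)
qed

lemma Psig_star_img_eq_characters:
  assumes fin: "finite T" and v_vanishes: "\<forall>i\<in>T. \<forall>k\<ge>r. v i k = 0"
  shows "Psig_star_img r v T = range (\<lambda>m i. if i \<in> T then dotp r m (v i) else 0)"
proof
  show "Psig_star_img r v T \<subseteq> range (\<lambda>m i. if i \<in> T then dotp r m (v i) else 0)"
  proof
    fix x assume "x \<in> Psig_star_img r v T"
    then obtain phi where phi: "additive_on (Nsig r v T) phi" "x = (\<lambda>i. if i \<in> T then phi (v i) else 0)"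
      unfolding Psig_star_img_def Nsig_dual_def additive_on_def by blast
    obtain M :: vec where "\<forall>u\<in>Nsig r v T. lin_form r M u = phi u"
      using additive_on_Nsig_is_lin_form[OF fin phi(1)] by blast
    then have "phi (v i) = dotp r M (v i)" if "i \<in> T" for i
      using generator_in_Nsig[of T i r v] fin that v_vanishes by (simp add: lin_form_int_eq_dotp)
    then have "x = (\<lambda>i. if i \<in> T then dotp r M (v i) else 0)"
      using phi(2) by (simp add: fun_eq_iff)
    then show "x \<in> range (\<lambda>m i. if i \<in> T then dotp r m (v i) else 0)" by blast
  qed
  show "range (\<lambda>m i. if i \<in> T then dotp r m (v i) else 0) \<subseteq> Psig_star_img r v T"
    using character_in_Psig_star_img by blast
qed

lemma CDiv_iff_locally_principal:
  assumes fan: "simplicial_fan n r v Sig" and a: "a \<in> Elat n"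
  shows "a \<in> CDiv n r v Sig \<longleftrightarrow> (\<forall>S\<in>max_cones Sig. restr S a \<in> Psig_star_img r v S)"
proof
  have max_in_Sig: "max_cones Sig \<subseteq> Sig" unfolding max_cones_def by blast
  assume "a \<in> CDiv n r v Sig"
  show "\<forall>S\<in>max_cones Sig. restr S a \<in> Psig_star_img r v S"
  proof
    fix S assume "S \<in> max_cones Sig"
    then obtain m where "\<forall>i\<in>S. a i = dotp r m (v i)"
      using \<open>a \<in> CDiv n r v Sig\<close> max_in_Sig unfolding CDiv_def by blast
    then have "restr S a = (\<lambda>i. if i \<in> S then dotp r m (v i) else 0)"
      by (auto simp: restr_def)
    then show "restr S a \<in> Psig_star_img r v S"
      using character_in_Psig_star_img by simp
  qed
next
  have v_vanishes: "\<forall>i<n. \<forall>k\<ge>r. v i k = 0" and Sig_sub: "Sig \<subseteq> Pow {..<n}"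
    using fan unfolding simplicial_fan_def by blast+
  assume local: "\<forall>S\<in>max_cones Sig. restr S a \<in> Psig_star_img r v S"
  have "\<exists>m. \<forall>i\<in>S. a i = dotp r m (v i)" if S: "S \<in> Sig" for S
  proof -
    have "finite Sig" using Sig_sub by (rule finite_subset) simp
    then obtain T where T: "T \<in> max_cones Sig" "S \<subseteq> T"
      using max_cones_cover S by blast
    have "T \<subseteq> {..<n}" using T(1) Sig_sub unfolding max_cones_def by blast
    then have "finite T" "\<forall>i\<in>T. \<forall>k\<ge>r. v i k = 0"
      using v_vanishes finite_subset by blast+
    then obtain m where "restr T a = (\<lambda>i. if i \<in> T then dotp r m (v i) else 0)"
      using local T(1) Psig_star_img_eq_characters by blast
    then have "\<forall>i\<in>T. a i = dotp r m (v i)"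
      by (simp add: restr_def fun_eq_iff) metis
    then show ?thesis using T(2) by blast
  qed
  then show "a \<in> CDiv n r v Sig" using a unfolding CDiv_def by blast
qed

lemma DirSumK_eq_quotient_sum:
  "DirSumK r v Sig = quotient_sum (max_cones Sig) Fsig_dual (Psig_star_img r v)"
  unfolding DirSumK_def quotient_sum_def Ksig_def ..

lemma piK_coset:
  assumes "Sig \<subseteq> Pow {..<n}"
  shows "piK r v Sig ({a} + PstarM n r v) =
    (\<lambda>S. if S \<in> max_cones Sig then {restr S a} + Psig_star_img r v S else 0)"
proof
  fix S show "piK r v Sig ({a} + PstarM n r v) S =
    (if S \<in> max_cones Sig then {restr S a} + Psig_star_img r v S else 0)"
  proof (cases "S \<in> max_cones Sig")
    case True
    then have "S \<subseteq> {..<n}" using assms unfolding max_cones_def by blast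
    then show ?thesis using True by (simp add: piK_def pi_sig_coset)
  qed (simp add: piK_def)
qed

lemma piK_coset_eq_iff:
  assumes fan: "simplicial_fan n r v Sig" and a: "a \<in> Elat n" and b: "b \<in> Elat n"
  shows "piK r v Sig ({a} + PstarM n r v) = piK r v Sig ({b} + PstarM n r v) \<longleftrightarrow>
    a - b \<in> CDiv n r v Sig"
proof -
  have Sig_sub: "Sig \<subseteq> Pow {..<n}" using fan unfolding simplicial_fan_def by blast
  have "piK r v Sig ({a} + PstarM n r v) = piK r v Sig ({b} + PstarM n r v) \<longleftrightarrow>
      (\<forall>S\<in>max_cones Sig. {restr S a} + Psig_star_img r v S = {restr S b} + Psig_star_img r v S)"
  proof
    assume eq: "piK r v Sig ({a} + PstarM n r v) = piK r v Sig ({b} + PstarM n r v)"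
    show "\<forall>S\<in>max_cones Sig. {restr S a} + Psig_star_img r v S = {restr S b} + Psig_star_img r v S"
    proof
      fix S assume "S \<in> max_cones Sig"
      with fun_cong[OF eq, of S] show "{restr S a} + Psig_star_img r v S = {restr S b} + Psig_star_img r v S"
        by (simp add: piK_coset[OF Sig_sub])
    qed
  qed (simp add: piK_coset[OF Sig_sub] fun_eq_iff)
  also have "\<dots> \<longleftrightarrow> (\<forall>S\<in>max_cones Sig. restr S (a - b) \<in> Psig_star_img r v S)"
    by (simp add: coset_eq_iff[OF add_subgroup_Psig_star_img] restr_diff)
  also have "\<dots> \<longleftrightarrow> a - b \<in> CDiv n r v Sig"
    using CDiv_iff_locally_principal[OF fan add_subgroup_diff[OF add_subgroup_Elat a b]] by simp
  finally show ?thesis .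
qed

lemma card_Cl_quotient_Pic:
  assumes fan: "simplicial_fan n r v Sig"
  shows "card (cosets (ClZ n r v) (PicZ n r v Sig)) = card (piK r v Sig ` ClZ n r v)"
proof -
  have "Sig \<subseteq> Pow {..<n}" using fan unfolding simplicial_fan_def by blast
  have "piK r v Sig ` ClZ n r v = (\<lambda>a. piK r v Sig ({a} + PstarM n r v)) ` Elat n"
    unfolding ClZ_def cosets_def image_image ..
  moreover have "card (cosets (ClZ n r v) (PicZ n r v Sig)) =
      card ((\<lambda>a. piK r v Sig ({a} + PstarM n r v)) ` Elat n)"
    unfolding ClZ_def PicZ_def
    by (rule card_quotient_of_quotients[OF add_subgroup_PstarM add_subgroup_CDiv
          PstarM_subset_CDiv[OF \<open>Sig \<subseteq> Pow {..<n}\<close>] piK_coset_eq_iff[OF fan]])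
  ultimately show ?thesis by simp
qed

lemma card_DirSumK_eq_Khat_times_image:
  assumes fan: "simplicial_fan n r v Sig"
  shows "card (DirSumK r v Sig) = card (Khat n r v Sig) * card (piK r v Sig ` ClZ n r v)"
proof -
  have Sig_sub: "Sig \<subseteq> Pow {..<n}" using fan unfolding simplicial_fan_def by blast
  define D where "D = DirSumK r v Sig"
  define e where "e S = (if S \<in> max_cones Sig then Psig_star_img r v S else 0)" for S
  define g where "g a = piK r v Sig ({a} + PstarM n r v)" for a
  have g: "g a = (\<lambda>S. if S \<in> max_cones Sig then {restr S a} + Psig_star_img r v S else 0)" for a
    unfolding g_def piK_coset[OF Sig_sub] ..
  have grp: "group \<lparr>carrier = D, mult = (+), one = e\<rparr>"
    unfolding D_def DirSumK_eq_quotient_sum e_def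
    by (rule group_quotient_sum[OF add_subgroup_Fsig_dual add_subgroup_Psig_star_img])
  have "g ` Elat n \<subseteq> D"
  proof (rule image_subsetI)
    fix a
    have "{restr S a} + Psig_star_img r v S \<in> Ksig r v S" for S
      unfolding Ksig_def cosets_def using restr_in_Fsig_dual by blast
    then show "g a \<in> D" unfolding D_def DirSumK_def g by simp
  qed
  moreover have "g 0 = e"
    by (simp add: g e_def restr_zero fun_eq_iff)
  moreover have "g (a + b) = g a + g b" for a b
    by (simp add: g fun_eq_iff restr_add coset_plus_coset[OF add_subgroup_Psig_star_img])
  ultimately have "subgroup (g ` Elat n) \<lparr>carrier = D, mult = (+), one = e\<rparr>"
    by (intro subgroup_image_additive[OF grp add_subgroup_Elat])
  moreover have "piK r v Sig ` ClZ n r v = g ` Elat n"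
    unfolding ClZ_def cosets_def image_image g_def ..
  ultimately show ?thesis
    using card_cosets_mult_card_subgroup[OF grp] unfolding Khat_def D_def by simp
qed

lemma card_Ksig_pos:
  assumes fan: "simplicial_fan n r v Sig" and S: "S \<in> Sig"
  shows "card (Ksig r v S) > 0"
proof -
  have "S \<subseteq> {..<n}" "lin_indep_Q r v S" "\<forall>i<n. \<forall>k\<ge>r. v i k = 0"
    using fan S unfolding simplicial_fan_def by blast+
  then have "finite (Ksig r v S)"
    by (intro finite_Ksig) (auto intro: finite_subset)
  moreover have "{0} + Psig_star_img r v S \<in> Ksig r v S"
    unfolding Ksig_def cosets_def by (intro imageI) (simp add: Fsig_dual_def)
  ultimately show ?thesis by (simp add: card_gt_0_iff) blast
qed

lemma finite_max_cones:
  assumes "simplicial_fan n r v Sig"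
  shows "finite (max_cones Sig)"
proof -
  have "Sig \<subseteq> Pow {..<n}" using assms unfolding simplicial_fan_def by blast
  then have "finite Sig" by (rule finite_subset) simp
  then show ?thesis unfolding max_cones_def by simp
qed

lemma card_DirSumK_eq_prod:
  assumes "finite (max_cones Sig)"
  shows "card (DirSumK r v Sig) = (\<Prod>S\<in>max_cones Sig. card (Ksig r v S))"
  unfolding DirSumK_eq_quotient_sum Ksig_def using assms by (rule card_quotient_sum)

theorem proposition2p7:
  fixes n r :: nat and v :: "nat \<Rightarrow> vec" and Sig :: "nat set set"
  assumes "simplicial_fan n r v Sig"
    and "nondegenerate n r v"
  shows "real (card (cosets (ClZ n r v) (PicZ n r v Sig))) =
           (\<Prod>S\<in>max_cones Sig. real (card (Ksig r v S))) / real (card (Khat n r v Sig))"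
proof -
  have eq: "card (Khat n r v Sig) * card (piK r v Sig ` ClZ n r v) =
      (\<Prod>S\<in>max_cones Sig. card (Ksig r v S))"
    using card_DirSumK_eq_Khat_times_image[OF assms(1)]
      card_DirSumK_eq_prod[OF finite_max_cones[OF assms(1)]] by simp
  moreover have "(\<Prod>S\<in>max_cones Sig. card (Ksig r v S)) > 0"
    using card_Ksig_pos[OF assms(1)] by (intro prod_pos) (simp add: max_cones_def)
  ultimately have "card (Khat n r v Sig) \<noteq> 0" by (intro notI) simp
  moreover have "real (card (Khat n r v Sig)) * real (card (piK r v Sig ` ClZ n r v)) =
      (\<Prod>S\<in>max_cones Sig. real (card (Ksig r v S)))"
    using arg_cong[OF eq, of real] by simp
  ultimately show ?thesis
    unfolding card_Cl_quotient_Pic[OF assms(1)] by (simp add: eq_divide_eq mult.commute)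
qed

end
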